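(* For every integer $L\ge 5$, the class of Subgraph MPNNs cannot count $L$-cycles at node level, and for every integer $L\ge 4$, the class of Subgraph MPNNs cannot count $L$-paths at node level. That is, for each such $L$ there exist node-graph pairs $(i_1,G_1),(i_2,G_2)$ with $C(L\text{-cycle},i_1,G_1)\ne C(L\text{-cycle},i_2,G_2)$ (resp. $C(L\text{-path},i_1,G_1)\ne C(L\text{-path},i_2,G_2)$) such that every Subgraph MPNN gives $h_{i_1}(G_1)=h_{i_2}(G_2)$.
   Context: Graphs are finite, simple, undirected, $G=(V,E)$, possibly carrying node attributes $x_v$ and edge attributes $e_{u,v}$ (a fixed constant when absent). $N(v)$ is the neighbour set of $v$. For $L\ge 1$, an $L$-path is a sequence of edges $(v_1,v_2),\dots,(v_L,v_{L+1})$ of $G$ with $v_1,\dots,v_{L+1}$ pairwise distinct; for $L\ge 3$, an $L$-cycle is such a sequence with $v_1,\dots,v_L$ pairwise distinct and $v_{L+1}=v_1$. Two paths (resp. cycles) are identified when their edge sets coincide. $C(L\text{-cycle},i,G)$ is the number of inequivalent $L$-cycles containing node $i$; $C(L\text{-path},i,G)$ is the number of inequivalent $L$-paths starting from $i$. A class $\mathcal F$ of functions on node-graph pairs can count $S$ at node level if for all $(i_1,G_1),(i_2,G_2)$ with $C(S,i_1,G_1)\ne C(S,i_2,G_2)$ there is $f\in\mathcal F$ with $f(i_1,G_1)\ne f(i_2,G_2)$. Subgraph MPNNs. A Subgraph MPNN is specified by: (1) a subgraph extraction rule, either node deletion, $(V_i,E_i)=(V\setminus\{i\},E\setminus\{(i,j):j\in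 N(i)\})$, or the $K$-hop ego-network for some integer $K\ge1$, i.e. $(V_i,E_i)$ is the subgraph of $G$ induced by the nodes at shortest-path distance at most $K$ from $i$; (2) a node labeling $z_{i,j}$, which is either absent, identity labeling $z_{i,j}=\mathbb 1_{i=j}$, or shortest path distance $z_{i,j}=\mathrm{spd}(i,j)$; (3) a number of layers $T$ and arbitrary functions $M_t$ (with values in some $\mathbb R^{d_t}$) and $U_t$; (4) an arbitrary readout $R_{\text{node}}$ on finite multisets. For each root $i\in V$ and $j\in V_i$: $h^{(0)}_{i,j}=x_j\oplus z_{i,j}$, $h^{(t+1)}_{i,j}=U_t\big(h^{(t)}_{i,j},\sum_{k\in N_i(j)}M_t(h^{(t)}_{i,j},h^{(t)}_{i,k},e_{j,k})\big)$ with $N_i(j)=\{k\in V_i:(j,k)\in E_i\}$, and $h_i=R_{\text{node}}(\{\!\{h^{(T)}_{i,j}:j\in V_i\}\!\})$. The node-level function computed is $(i,G)\mapsto h_i$; the class of Subgraph MPNNs consists of all such choices. *)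

theory Defs
  imports Main "HOL-Library.Multiset" "HOL-Library.Extended_Nat"
begin

record 'v graph =
  verts :: "'v set"
  edges :: "'v set set"
  nattr :: "'v \<Rightarrow> real list"
  eattr :: "'v \<Rightarrow> 'v \<Rightarrow> real list"

definition wf_graph :: "'v graph \<Rightarrow> bool" where
  "wf_graph G \<longleftrightarrow>
     finite (verts G) \<and>
     (\<forall>e\<in>edges G. \<exists>u v. u \<noteq> v \<and> u \<in> verts G \<and> v \<in> verts G \<and> e = {u, v}) \<and>
     (\<exists>d. \<forall>v\<in>verts G. length (nattr G v) = d) \<and>
     (\<exists>d. \<forall>u v. {u, v} \<in> edges G \<longrightarrow> length (eattr G u v) = d) \<and>
     (\<forall>u v. {u, v} \<in> edges G \<longrightarrow> eattr G u v = eattr G v u)"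

definition nbrs :: "'v graph \<Rightarrow> 'v \<Rightarrow> 'v set" where
  "nbrs G v = {u \<in> verts G. {v, u} \<in> edges G}"

text \<open>Walks (as vertex lists) and shortest-path distance (\<infinity> if unreachable).\<close>
definition walk :: "'v graph \<Rightarrow> 'v list \<Rightarrow> bool" where
  "walk G xs \<longleftrightarrow> xs \<noteq> [] \<and> set xs \<subseteq> verts G \<and>
     (\<forall>k. Suc k < length xs \<longrightarrow> {xs ! k, xs ! Suc k} \<in> edges G)"

definition spd :: "'v graph \<Rightarrow> 'v \<Rightarrow> 'v \<Rightarrow> enat" where
  "spd G i j = (INF xs \<in> {xs. walk G xs \<and> hd xs = i \<and> last xs = j}. enat (length xs - 1))"

definition seq_edges :: "nat \<Rightarrow> 'v list \<Rightarrow> 'v set set" where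
  "seq_edges L vs = {{vs ! k, vs ! Suc k} | k. k < L}"

definition is_path :: "'v graph \<Rightarrow> nat \<Rightarrow> 'v list \<Rightarrow> bool" where
  "is_path G L vs \<longleftrightarrow> length vs = Suc L \<and> distinct vs \<and>
     (\<forall>k<L. {vs ! k, vs ! Suc k} \<in> edges G)"

definition is_cycle :: "'v graph \<Rightarrow> nat \<Rightarrow> 'v list \<Rightarrow> bool" where
  "is_cycle G L vs \<longleftrightarrow> length vs = Suc L \<and> distinct (take L vs) \<and> vs ! L = vs ! 0 \<and>
     (\<forall>k<L. {vs ! k, vs ! Suc k} \<in> edges G)"

text \<open>Counts of inequivalent (edge-set-identified) cycles containing i / paths starting at i.\<close>
definition cycle_count :: "nat \<Rightarrow> 'v \<Rightarrow> 'v graph \<Rightarrow> nat" where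
  "cycle_count L i G = card {seq_edges L vs | vs. is_cycle G L vs \<and> i \<in> set vs}"

definition path_count :: "nat \<Rightarrow> 'v \<Rightarrow> 'v graph \<Rightarrow> nat" where
  "path_count L i G = card {seq_edges L vs | vs. is_path G L vs \<and> hd vs = i}"

datatype extraction = NodeDeletion | EgoNet nat
datatype labeling = NoLabel | IdLabel | SpdLabel

text \<open>M t: message function of layer t, with values in R^(d t) (encoded as functions
  nat => real vanishing from index d t on); U t: update; R: readout on finite multisets.\<close>
record mpnn =
  ext :: extraction
  lab :: labeling
  layers :: nat
  dim :: "nat \<Rightarrow> nat"
  msg :: "nat \<Rightarrow> real list \<Rightarrow> real list \<Rightarrow> real list \<Rightarrow> (nat \<Rightarrow> real)"
  upd :: "nat \<Rightarrow> real list \<Rightarrow> (nat \<Rightarrow> real) \<Rightarrow> real list"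
  readout :: "real list multiset \<Rightarrow> real list"

definition wf_mpnn :: "mpnn \<Rightarrow> bool" where
  "wf_mpnn P \<longleftrightarrow> (\<forall>K. ext P = EgoNet K \<longrightarrow> K \<ge> 1) \<and>
     (\<forall>t a b c n. dim P t \<le> n \<longrightarrow> msg P t a b c n = 0)"

definition sub_verts :: "extraction \<Rightarrow> 'v graph \<Rightarrow> 'v \<Rightarrow> 'v set" where
  "sub_verts x G i = (case x of
      NodeDeletion \<Rightarrow> verts G - {i}
    | EgoNet K \<Rightarrow> {j \<in> verts G. spd G i j \<le> enat K})"

text \<open>Neighbours of j inside the extracted subgraph of root i (both extraction rules give
  the subgraph induced by the extracted vertex set).\<close>
definition sub_nbrs :: "extraction \<Rightarrow> 'v graph \<Rightarrow> 'v \<Rightarrow> 'v \<Rightarrow> 'v set" where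
  "sub_nbrs x G i j = {k \<in> sub_verts x G i. {j, k} \<in> edges G}"

definition node_label :: "labeling \<Rightarrow> 'v graph \<Rightarrow> 'v \<Rightarrow> 'v \<Rightarrow> real list" where
  "node_label l G i j = (case l of
      NoLabel \<Rightarrow> []
    | IdLabel \<Rightarrow> [if i = j then 1 else 0]
    | SpdLabel \<Rightarrow> [case spd G i j of enat n \<Rightarrow> real n | \<infinity> \<Rightarrow> -1])"

fun hstate :: "mpnn \<Rightarrow> 'v graph \<Rightarrow> 'v \<Rightarrow> nat \<Rightarrow> 'v \<Rightarrow> real list" where
  "hstate P G i 0 j = nattr G j @ node_label (lab P) G i j"
| "hstate P G i (Suc t) j =
     upd P t (hstate P G i t j)
       (\<lambda>n. \<Sum>k\<in>sub_nbrs (ext P) G i j.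
              msg P t (hstate P G i t j) (hstate P G i t k) (eattr G j k) n)"

definition mpnn_out :: "mpnn \<Rightarrow> 'v graph \<Rightarrow> 'v \<Rightarrow> real list" where
  "mpnn_out P G i = readout P (image_mset (hstate P G i (layers P)) (mset_set (sub_verts (ext P) G i)))"

definition subgraph_mpnns :: "(nat \<times> nat graph \<Rightarrow> real list) set" where
  "subgraph_mpnns = {(\<lambda>(i, G). mpnn_out P G i) | P. wf_mpnn P}"

text \<open>Node-level counting power of a class of functions on node-graph pairs
  (vertices drawn from nat; every finite graph is isomorphic to such a graph).\<close>
definition can_count_node ::
    "(nat \<times> nat graph \<Rightarrow> 'o) set \<Rightarrow> (nat \<Rightarrow> nat graph \<Rightarrow> nat) \<Rightarrow> bool" where
  "can_count_node F C \<longleftrightarrow>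
     (\<forall>i1 G1 i2 G2. wf_graph G1 \<and> i1 \<in> verts G1 \<and> wf_graph G2 \<and> i2 \<in> verts G2 \<and>
        C i1 G1 \<noteq> C i2 G2 \<longrightarrow> (\<exists>f\<in>F. f (i1, G1) \<noteq> f (i2, G2)))"

end

theory Submission
  imports Defs
begin

(* The witnesses are the cones (apex n joined to every base vertex) over the n-cycle and over
   n/3 disjoint triangles, for n = 3L, both rooted at the apex. Seen from the apex, node deletion
   leaves the base graph and every ego-network is the whole cone; either way the apex is adjacent
   to all base vertices and every base vertex has exactly two base neighbours. By induction on the
   layer, all base vertices of both graphs carry one common state and so do the two apices, so
   every Subgraph MPNN gives the same output at both roots. But the apex starts an L-path and lies
   on an L-cycle of the cone over the cycle, whereas in the cone over the triangles such a path
   (L >= 4) or cycle (L >= 5, rotated to start at the apex) would run through four distinct base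
   vertices in a row, all inside one triangle. *)

lemma spd_refl:
  assumes "i \<in> verts G"
  shows "spd G i i = 0"
proof -
  have "walk G [i]" using assms by (simp add: walk_def)
  then have "spd G i i \<le> enat 0" unfolding spd_def by (intro INF_lower2[of "[i]"]) auto
  then show ?thesis by (simp add: zero_enat_def[symmetric])
qed

lemma spd_adjacent:
  assumes "i \<noteq> j" "{i, j} \<in> edges G" "i \<in> verts G" "j \<in> verts G"
  shows "spd G i j = 1"
proof (rule antisym)
  have "walk G [i, j]" using assms by (auto simp: walk_def less_Suc_eq)
  then show "spd G i j \<le> 1"
    unfolding spd_def by (intro INF_lower2[of "[i, j]"]) (auto simp: one_enat_def)
  show "1 \<le> spd G i j" unfolding spd_def
  proof (rule INF_greatest)
    fix xs assume "xs \<in> {xs. walk G xs \<and> hd xs = i \<and> last xs = j}"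
    then have "2 \<le> length xs" using assms(1) by (cases xs; cases "tl xs") (auto simp: walk_def)
    then show "1 \<le> enat (length xs - 1)" by (simp add: one_enat_def)
  qed
qed

lemma is_path_take:
  "is_path G L vs \<Longrightarrow> l \<le> L \<Longrightarrow> is_path G l (take (Suc l) vs)"
  by (auto simp: is_path_def)

lemma is_path_take_cycle:
  assumes "is_cycle G L vs" "l < L"
  shows "is_path G l (take (Suc l) vs)"
proof -
  have "distinct (take (Suc l) vs)"
    using assms distinct_take[of "take L vs" "Suc l"] by (simp add: is_cycle_def min_absorb1)
  then show ?thesis using assms by (auto simp: is_path_def is_cycle_def)
qed

lemma is_cycle_rotate:
  assumes c: "is_cycle G L vs" and p: "p < L"
  shows "is_cycle G L (map (\<lambda>i. vs ! ((p + i) mod L)) [0..<Suc L])"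
proof -
  let ?r = "\<lambda>i. (p + i) mod L"
  have len: "length vs = Suc L" and dist: "distinct (take L vs)" and wrap: "vs ! L = vs ! 0"
    and edge: "\<And>k. k < L \<Longrightarrow> {vs ! k, vs ! Suc k} \<in> edges G"
    using c by (simp_all add: is_cycle_def)
  have r: "?r i = (if p + i < L then p + i else p + i - L)" if "i < L" for i
    using that p by (simp add: le_mod_geq)
  have "inj_on (\<lambda>i. vs ! ?r i) {0..<L}"
  proof (rule inj_onI)
    fix i j assume ij: "i \<in> {0..<L}" "j \<in> {0..<L}" and "vs ! ?r i = vs ! ?r j"
    then have "?r i = ?r j" using nth_eq_iff_index_eq[OF dist, of "?r i" "?r j"] p len by simp
    then show "i = j" using ij r[of i] r[of j] by (auto split: if_splits)
  qed
  then have "distinct (map (\<lambda>i. vs ! ?r i) [0..<L])" by (simp add: distinct_map)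
  moreover have "{vs ! ?r k, vs ! ?r (Suc k)} \<in> edges G" for k
  proof -
    have "vs ! (Suc m mod L) = vs ! Suc (m mod L)" for m
      using wrap by (simp add: mod_Suc)
    then show ?thesis using edge[of "?r k"] p by simp
  qed
  moreover have "take L (map (\<lambda>i. vs ! ?r i) [0..<Suc L]) = map (\<lambda>i. vs ! ?r i) [0..<L]"
    by (simp add: take_map del: upt_Suc)
  ultimately show ?thesis
    unfolding is_cycle_def using p by (simp del: upt_Suc)
qed

lemma cycle_vertex_index:
  assumes "is_cycle G L vs" "0 < L" "x \<in> set vs"
  obtains p where "p < L" "vs ! p = x"
proof -
  obtain q where q: "q \<le> L" "vs ! q = x"
    using assms by (auto simp: is_cycle_def in_set_conv_nth less_Suc_eq_le)
  show ?thesis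
  proof (cases "q = L")
    case True
    then show ?thesis using that[of 0] assms q by (simp add: is_cycle_def)
  next
    case False
    then show ?thesis using that[of q] q by simp
  qed
qed

lemma path_count_pos:
  assumes "finite (edges G)" "is_path G L vs"
  shows "0 < path_count L (hd vs) G"
proof -
  have "{seq_edges L ws | ws. is_path G L ws \<and> hd ws = hd vs} \<subseteq> Pow (edges G)"
    by (auto simp: is_path_def seq_edges_def)
  then show ?thesis
    using assms unfolding path_count_def by (subst card_gt_0_iff) (blast intro: finite_subset)
qed

lemma cycle_count_pos:
  assumes "finite (edges G)" "is_cycle G L vs" "i \<in> set vs"
  shows "0 < cycle_count L i G"
proof -
  have "{seq_edges L ws | ws. is_cycle G L ws \<and> i \<in> set ws} \<subseteq> Pow (edges G)"
    by (auto simp: is_cycle_def seq_edges_def)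
  then show ?thesis
    using assms unfolding cycle_count_def by (subst card_gt_0_iff) (blast intro: finite_subset)
qed

lemma sum_cong_card:
  assumes "finite A" "finite B" "card A = card B"
    and "\<And>x y. x \<in> A \<Longrightarrow> y \<in> B \<Longrightarrow> f x = g y"
  shows "sum f A = sum g B"
proof -
  obtain h where h: "bij_betw h A B" using finite_same_card_bij assms(1-3) by blast
  then have "sum g B = (\<Sum>x\<in>A. g (h x))" by (simp add: sum.reindex_bij_betw)
  also have "\<dots> = sum f A"
    using assms(4) bij_betw_apply[OF h] by (intro sum.cong) (simp_all add: eq_commute)
  finally show ?thesis ..
qed

definition regular_graph_on :: "(nat \<Rightarrow> nat \<Rightarrow> bool) \<Rightarrow> nat \<Rightarrow> nat \<Rightarrow> bool" where
  "regular_graph_on H n d \<longleftrightarrow>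
     symp H \<and> (\<forall>x y. H x y \<longrightarrow> x \<noteq> y \<and> x < n \<and> y < n) \<and> (\<forall>x<n. card {y. H x y} = d)"

lemma regular_graph_on_adjD:
  "H x y \<Longrightarrow> regular_graph_on H n d \<Longrightarrow> x \<noteq> y \<and> x < n \<and> y < n"
  by (simp add: regular_graph_on_def)

definition cone :: "(nat \<Rightarrow> nat \<Rightarrow> bool) \<Rightarrow> nat \<Rightarrow> nat graph" where
  "cone H n = \<lparr>verts = {0..n}, edges = {{x, n} | x. x < n} \<union> {{x, y} | x y. H x y},
     nattr = (\<lambda>_. []), eattr = (\<lambda>_ _. [])\<rparr>"

lemma cone_simps [simp]:
  "verts (cone H n) = {0..n}"
  "nattr (cone H n) = (\<lambda>_. [])"
  "eattr (cone H n) = (\<lambda>_ _. [])"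
  by (simp_all add: cone_def)

lemma cone_edge_iff:
  assumes "symp H"
  shows "{a, b} \<in> edges (cone H n) \<longleftrightarrow> (a = n \<and> b < n) \<or> (b = n \<and> a < n) \<or> H a b"
  using assms by (auto simp: cone_def doubleton_eq_iff dest: sympD)

lemma cone_apex_edge: "j < n \<Longrightarrow> {n, j} \<in> edges (cone H n)"
  by (auto simp: cone_def insert_commute)

lemma finite_cone_edges:
  assumes "regular_graph_on H n d"
  shows "finite (edges (cone H n))"
proof (rule finite_subset)
  show "edges (cone H n) \<subseteq> Pow {0..n}"
    using assms by (auto simp: cone_def dest: regular_graph_on_adjD)
qed simp

lemma wf_graph_cone:
  assumes "regular_graph_on H n d"
  shows "wf_graph (cone H n)"
proof -
  have "\<exists>u v. u \<noteq> v \<and> u \<le> n \<and> v \<le> n \<and> e = {u, v}" if "e \<in> edges (cone H n)" for e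
  proof -
    from that consider x where "x < n" "e = {x, n}" | x y where "H x y" "e = {x, y}"
      by (auto simp: cone_def)
    then show ?thesis
    proof cases
      case (1 x)
      then show ?thesis by (intro exI[of _ x] exI[of _ n]) auto
    next
      case (2 x y)
      then show ?thesis
        using regular_graph_on_adjD[OF 2(1) assms] by (intro exI[of _ x] exI[of _ y]) auto
    qed
  qed
  then show ?thesis by (auto simp: wf_graph_def)
qed

lemma spd_cone_apex: "j \<le> n \<Longrightarrow> spd (cone H n) n j = (if j = n then 0 else 1)"
  by (simp add: spd_refl spd_adjacent cone_apex_edge)

lemma sub_verts_cone_apex:
  assumes "wf_mpnn P"
  shows "sub_verts (ext P) (cone H n) n = (if ext P = NodeDeletion then {0..<n} else {0..n})"
proof (cases "ext P")
  case (EgoNet K)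
  then have "1 \<le> K" using assms by (simp add: wf_mpnn_def)
  then have "spd (cone H n) n j \<le> enat K" if "j \<le> n" for j
    using that by (simp add: spd_cone_apex one_enat_def)
  then show ?thesis using EgoNet by (auto simp: sub_verts_def)
qed (auto simp: sub_verts_def)

lemma sub_nbrs_cone_apex:
  assumes "regular_graph_on H n d" "wf_mpnn P" "j \<le> n"
  shows "sub_nbrs (ext P) (cone H n) n j =
    {k. k < n \<and> (j = n \<or> H j k)} \<union> (if j < n \<and> ext P \<noteq> NodeDeletion then {n} else {})"
proof -
  have "symp H" using assms(1) by (simp add: regular_graph_on_def)
  then show ?thesis
    using assms
    by (auto simp: sub_nbrs_def sub_verts_cone_apex cone_edge_iff dest: regular_graph_on_adjD)
qed

lemma sub_nbrs_cone_apex_Int_apex: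
  "regular_graph_on H n d \<Longrightarrow> wf_mpnn P \<Longrightarrow> j \<le> n \<Longrightarrow>
    sub_nbrs (ext P) (cone H n) n j \<inter> {n} = (if j < n \<and> ext P \<noteq> NodeDeletion then {n} else {})"
  by (auto simp: sub_nbrs_cone_apex)

lemma card_sub_nbrs_cone_apex_Diff_apex:
  assumes "regular_graph_on H n d" "wf_mpnn P" "j \<le> n"
  shows "card (sub_nbrs (ext P) (cone H n) n j - {n}) = (if j = n then n else d)"
proof -
  have "sub_nbrs (ext P) (cone H n) n j - {n} = (if j = n then {0..<n} else {k. H j k})"
    using assms regular_graph_on_adjD[OF _ assms(1)] by (auto simp: sub_nbrs_cone_apex)
  then show ?thesis using assms by (simp add: regular_graph_on_def)
qed

lemma hstate_cone_apex_eq: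
  assumes H: "regular_graph_on H n d" and H': "regular_graph_on H' n d" and P: "wf_mpnn P"
    and "j \<le> n" "k \<le> n" "j = n \<longleftrightarrow> k = n"
  shows "hstate P (cone H n) n t j = hstate P (cone H' n) n t k"
  using assms(4-)
proof (induction t arbitrary: j k)
  case 0
  then show ?case by (auto simp: node_label_def spd_cone_apex split: labeling.split)
next
  case (Suc t)
  let ?h = "hstate P (cone H n) n t" and ?h' = "hstate P (cone H' n) n t"
  define S where "S = sub_nbrs (ext P) (cone H n) n j"
  define S' where "S' = sub_nbrs (ext P) (cone H' n) n k"
  note nbrs = sub_nbrs_cone_apex[OF H P] sub_nbrs_cone_apex[OF H' P]
  have fin: "finite S" "finite S'"
    using Suc.prems by (simp_all add: S_def S'_def nbrs)
  have le: "x \<le> n" if "x \<in> S \<union> S'" for x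
    using that Suc.prems by (auto simp: S_def S'_def nbrs split: if_splits)
  have card_apex: "card (S \<inter> {n}) = card (S' \<inter> {n})"
    using Suc.prems
    by (auto simp: S_def S'_def sub_nbrs_cone_apex_Int_apex[OF H P] sub_nbrs_cone_apex_Int_apex[OF H' P])
  have card_base: "card (S - {n}) = card (S' - {n})"
    using Suc.prems card_sub_nbrs_cone_apex_Diff_apex[OF H P] card_sub_nbrs_cone_apex_Diff_apex[OF H' P]
    by (simp add: S_def S'_def)
  have "(\<Sum>x\<in>S. msg P t (?h j) (?h x) [] i) = (\<Sum>y\<in>S'. msg P t (?h' k) (?h' y) [] i)" for i
  proof -
    have msg_eq: "msg P t (?h j) (?h x) [] i = msg P t (?h' k) (?h' y) [] i"
      if "x \<in> S" "y \<in> S'" "x = n \<longleftrightarrow> y = n" for x y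
      using Suc.IH[OF Suc.prems] Suc.IH[of x y] le that by simp
    show ?thesis
      unfolding sum.Int_Diff[OF fin(1), of _ "{n}"] sum.Int_Diff[OF fin(2), of _ "{n}"]
      using fin card_apex card_base msg_eq by (intro arg_cong2[where f="(+)"] sum_cong_card) auto
  qed
  then show ?case using Suc.IH[OF Suc.prems] by (simp add: S_def S'_def)
qed

lemma mpnn_out_cone_apex_eq:
  assumes "regular_graph_on H n d" "regular_graph_on H' n d" "wf_mpnn P"
  shows "mpnn_out P (cone H n) n = mpnn_out P (cone H' n) n"
proof -
  let ?V = "sub_verts (ext P) (cone H n) n"
  have V: "sub_verts (ext P) (cone H' n) n = ?V" "finite ?V" "?V \<subseteq> {0..n}"
    by (auto simp: sub_verts_cone_apex[OF assms(3)])
  have "hstate P (cone H n) n (layers P) x = hstate P (cone H' n) n (layers P) x"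
    if "x \<in># mset_set ?V" for x
    using that V hstate_cone_apex_eq[OF assms] by auto
  then show ?thesis unfolding mpnn_out_def V(1) by (simp cong: image_mset_cong)
qed

lemma not_can_count_node_cone_apex:
  assumes H: "regular_graph_on H n d" and H': "regular_graph_on H' n d"
    and C: "C n (cone H n) \<noteq> C n (cone H' n)"
  shows "\<not> can_count_node subgraph_mpnns C"
proof
  assume "can_count_node subgraph_mpnns C"
  moreover have "n \<in> verts (cone H n)" "n \<in> verts (cone H' n)" by simp_all
  ultimately obtain f where "f \<in> subgraph_mpnns" "f (n, cone H n) \<noteq> f (n, cone H' n)"
    using wf_graph_cone[OF H] wf_graph_cone[OF H'] C unfolding can_count_node_def by blast
  then obtain P where "wf_mpnn P" "mpnn_out P (cone H n) n \<noteq> mpnn_out P (cone H' n) n"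
    unfolding subgraph_mpnns_def by auto
  with mpnn_out_cone_apex_eq[OF H H'] show False by blast
qed

definition cycle_adj :: "nat \<Rightarrow> nat \<Rightarrow> nat \<Rightarrow> bool" where
  "cycle_adj n x y \<longleftrightarrow> x < n \<and> y < n \<and>
     (y = Suc x \<or> x = Suc y \<or> (x = 0 \<and> y = n - 1) \<or> (y = 0 \<and> x = n - 1))"

definition triangles_adj :: "nat \<Rightarrow> nat \<Rightarrow> nat \<Rightarrow> bool" where
  "triangles_adj n x y \<longleftrightarrow> x < n \<and> y < n \<and> x \<noteq> y \<and> x div 3 = y div 3"

lemma symp_cycle_adj: "symp (cycle_adj n)"
  by (auto simp: symp_def cycle_adj_def)

lemma symp_triangles_adj: "symp (triangles_adj n)"
  by (auto simp: symp_def triangles_adj_def)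

lemma regular_graph_on_cycle_adj:
  assumes "3 \<le> n"
  shows "regular_graph_on (cycle_adj n) n 2"
proof -
  have "card {y. cycle_adj n x y} = 2" if "x < n" for x
  proof -
    consider "x = 0" | "x = n - 1" | "0 < x" "x < n - 1" using \<open>x < n\<close> by linarith
    then show ?thesis
    proof cases
      case 1
      then have "{y. cycle_adj n x y} = {1, n - 1}" using assms by (auto simp: cycle_adj_def)
      then show ?thesis using assms by simp
    next
      case 2
      then have "{y. cycle_adj n x y} = {0, x - 1}" using assms by (auto simp: cycle_adj_def)
      then show ?thesis using 2 assms by simp
    next
      case 3
      then have "{y. cycle_adj n x y} = {Suc x, x - 1}" by (auto simp: cycle_adj_def)
      then show ?thesis by simp
    qed
  qed
  then show ?thesis
    using assms symp_cycle_adj by (auto simp: regular_graph_on_def cycle_adj_def)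
qed

lemma regular_graph_on_triangles_adj:
  assumes "3 dvd n"
  shows "regular_graph_on (triangles_adj n) n 2"
proof -
  have "card {y. triangles_adj n x y} = 2" if "x < n" for x
  proof -
    define b where "b = x div 3"
    have "3 * b + 2 < n" using that assms unfolding b_def by (elim dvdE) presburger
    then have "{y. triangles_adj n x y} = {3 * b, 3 * b + 1, 3 * b + 2} - {x}"
      using that unfolding triangles_adj_def b_def by auto
    moreover have "x \<in> {3 * b, 3 * b + 1, 3 * b + 2}" unfolding b_def by auto
    ultimately show ?thesis by simp
  qed
  then show ?thesis using symp_triangles_adj by (auto simp: regular_graph_on_def triangles_adj_def)
qed

lemma is_path_cycle_cone_apex:
  assumes "L < n"
  shows "is_path (cone (cycle_adj n) n) L (n # [0..<L])"
proof -
  let ?vs = "n # [0..<L]"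
  have "{?vs ! k, ?vs ! Suc k} \<in> edges (cone (cycle_adj n) n)" if "k < L" for k
    using that assms by (auto simp: cone_edge_iff[OF symp_cycle_adj] cycle_adj_def nth_Cons')
  then show ?thesis using assms by (auto simp: is_path_def)
qed

lemma is_cycle_cycle_cone_apex:
  assumes "3 \<le> L" "L \<le> n"
  shows "is_cycle (cone (cycle_adj n) n) L (n # [0..<L - 1] @ [n])"
proof -
  let ?vs = "n # [0..<L - 1] @ [n]"
  have "{?vs ! k, ?vs ! Suc k} \<in> edges (cone (cycle_adj n) n)" if "k < L" for k
    using that assms
    by (auto simp: cone_edge_iff[OF symp_cycle_adj] cycle_adj_def nth_Cons' nth_append)
  moreover have "take L ?vs = n # [0..<L - 1]"
    using assms by (cases L) auto
  ultimately show ?thesis using assms by (auto simp: is_cycle_def nth_append)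
qed

lemma triangles_cone_edge_same_block:
  "{a, b} \<in> edges (cone (triangles_adj n) n) \<Longrightarrow> a \<noteq> n \<Longrightarrow> b \<noteq> n \<Longrightarrow> a div 3 = b div 3"
  by (simp add: cone_edge_iff[OF symp_triangles_adj] triangles_adj_def)

lemma triangles_cone_no_apex_4_path:
  assumes "is_path (cone (triangles_adj n) n) 4 vs"
  shows "hd vs \<noteq> n"
proof
  assume "hd vs = n"
  have len: "length vs = 5" and dist: "distinct vs"
    and edge: "\<And>k. k < 4 \<Longrightarrow> {vs ! k, vs ! Suc k} \<in> edges (cone (triangles_adj n) n)"
    using assms by (simp_all add: is_path_def)
  have "vs ! 0 = n" using \<open>hd vs = n\<close> len by (cases vs) auto
  then have base: "vs ! k \<noteq> n" if "0 < k" "k < 5" for k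
    using that dist len nth_eq_iff_index_eq[OF dist, of k 0] by simp
  have block: "vs ! Suc k div 3 = vs ! 1 div 3" if "k < 4" for k
    using that
  proof (induction k)
    case (Suc k)
    then show ?case
      using triangles_cone_edge_same_block[OF edge[of "Suc k"]] base[of "Suc k"] base[of "Suc (Suc k)"]
      by simp
  qed simp
  let ?triangle = "{3 * (vs ! 1 div 3)..<3 * (vs ! 1 div 3) + 3}"
  have "set (tl vs) \<subseteq> ?triangle"
  proof
    fix x assume "x \<in> set (tl vs)"
    then obtain k where "k < 4" "x = vs ! Suc k" using len by (auto simp: in_set_conv_nth nth_tl)
    then show "x \<in> ?triangle" using block[of k] by auto
  qed
  then have "card (set (tl vs)) \<le> 3" using card_mono[of ?triangle] by simp
  moreover have "card (set (tl vs)) = 4" using dist len by (simp add: distinct_card distinct_tl)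
  ultimately show False by simp
qed

lemma path_count_triangles_cone_apex:
  assumes "4 \<le> L"
  shows "path_count L n (cone (triangles_adj n) n) = 0"
proof -
  have "hd vs \<noteq> n" if "is_path (cone (triangles_adj n) n) L vs" for vs
    using triangles_cone_no_apex_4_path[OF is_path_take[OF that assms]] that
    by (simp add: is_path_def hd_take)
  then have "{seq_edges L vs | vs. is_path (cone (triangles_adj n) n) L vs \<and> hd vs = n} = {}"
    by blast
  then show ?thesis unfolding path_count_def by (metis card.empty)
qed

lemma cycle_count_triangles_cone_apex:
  assumes "5 \<le> L"
  shows "cycle_count L n (cone (triangles_adj n) n) = 0"
proof -
  have "n \<notin> set vs" if c: "is_cycle (cone (triangles_adj n) n) L vs" for vs
  proof
    assume "n \<in> set vs"
    then obtain p where p: "p < L" "vs ! p = n" using cycle_vertex_index[OF c] assms by auto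
    let ?ws = "map (\<lambda>i. vs ! ((p + i) mod L)) [0..<Suc L]"
    have "is_path (cone (triangles_adj n) n) 4 (take 5 ?ws)"
      using is_path_take_cycle[OF is_cycle_rotate[OF c p(1)]] assms by (simp add: numeral_eq_Suc)
    moreover have "hd (take 5 ?ws) = n" using p by (simp add: hd_map del: upt_Suc)
    ultimately show False using triangles_cone_no_apex_4_path by blast
  qed
  then have "{seq_edges L vs | vs. is_cycle (cone (triangles_adj n) n) L vs \<and> n \<in> set vs} = {}"
    by blast
  then show ?thesis unfolding cycle_count_def by (metis card.empty)
qed

theorem theorem2:
  shows "(\<forall>L::nat. L \<ge> 5 \<longrightarrow> \<not> can_count_node subgraph_mpnns (cycle_count L)) \<and>
         (\<forall>L::nat. L \<ge> 4 \<longrightarrow> \<not> can_count_node subgraph_mpnns (path_count L))"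
proof -
  have cycle: "regular_graph_on (cycle_adj (3 * L)) (3 * L) 2" if "1 \<le> L" for L
    using that by (intro regular_graph_on_cycle_adj) simp
  have triangles: "regular_graph_on (triangles_adj (3 * L)) (3 * L) 2" for L
    by (intro regular_graph_on_triangles_adj) simp
  have "\<not> can_count_node subgraph_mpnns (cycle_count L)" if L: "5 \<le> L" for L
  proof (rule not_can_count_node_cone_apex[OF cycle triangles])
    have "0 < cycle_count L (3 * L) (cone (cycle_adj (3 * L)) (3 * L))"
      using L by (intro cycle_count_pos[OF finite_cone_edges[OF cycle] is_cycle_cycle_cone_apex]) auto
    then show "cycle_count L (3 * L) (cone (cycle_adj (3 * L)) (3 * L)) \<noteq>
        cycle_count L (3 * L) (cone (triangles_adj (3 * L)) (3 * L))"
      using L by (simp add: cycle_count_triangles_cone_apex)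
  qed (use L in simp)
  moreover have "\<not> can_count_node subgraph_mpnns (path_count L)" if L: "4 \<le> L" for L
  proof (rule not_can_count_node_cone_apex[OF cycle triangles])
    have "0 < path_count L (3 * L) (cone (cycle_adj (3 * L)) (3 * L))"
      using L path_count_pos[OF finite_cone_edges[OF cycle] is_path_cycle_cone_apex] by fastforce
    then show "path_count L (3 * L) (cone (cycle_adj (3 * L)) (3 * L)) \<noteq>
        path_count L (3 * L) (cone (triangles_adj (3 * L)) (3 * L))"
      using L by (simp add: path_count_triangles_cone_apex)
  qed (use L in simp)
  ultimately show ?thesis by simp
qed

end
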